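(* Let $(V,E)$ be a finite graph with $E\neq\emptyset$ and let $p\in(0,1)$. Let $(\eta_t,\sigma_t)_{t\ge0}$ be a continuous-time Markov jump process on $\{0,1\}^E\times\{-1,1\}^V$ which updates at most one site or one edge at each time (i.e. its rates $q((\eta,\sigma),(\eta',\sigma'))$ vanish unless $(\eta',\sigma')$ differs from $(\eta,\sigma)$ in at most one spin or at most one edge), and whose spin marginal $(\sigma_t)_{t\ge0}$ is a Markov jump process with transition rates $c(\sigma,\sigma')$ satisfying: $c(\sigma,\sigma')=0$ whenever $\sigma,\sigma'$ differ at two or more vertices, $c(\sigma,\sigma^x)>0$ for all $x\in V$, and $c(\sigma,\sigma)=-\sum_{y\in V}c(\sigma,\sigma^y)$. Then $(\eta_t,\sigma_t)_{t\ge0}$ cannot be reversible with respect to $IP$.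
   Context: Edge configurations $\eta\in\{0,1\}^E$, spin configurations $\sigma\in\{-1,1\}^V$. For $e=\langle x,y\rangle$, $\delta_\sigma(e)=\mathbf 1_{\sigma(x)=\sigma(y)}$. $IP(\eta,\sigma)=\frac1Z\prod_{e\in E}\big(p\mathbf 1_{\eta(e)=1}\delta_\sigma(e)+(1-p)\mathbf 1_{\eta(e)=0}\big)$ with $Z$ the normalizing constant. $\sigma^x$ is $\sigma$ with the spin at $x$ flipped. Reversibility with respect to $IP$ means $IP(a)q(a,b)=IP(b)q(b,a)$ for all states $a,b$. The spin marginal is a Markov jump process with rates $c$ if it is a time-homogeneous Markov process for every initial distribution, with rates $c$ not depending on the initial distribution. *)

theory Defs
  imports "HOL-Analysis.Analysis"
begin

text \<open>A finite simple graph: vertices form the finite type 'v, edges are 2-element vertex sets.\<close>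
definition simple_graph :: "'v set set \<Rightarrow> bool" where
  "simple_graph E \<longleftrightarrow> (\<forall>e\<in>E. \<exists>x y. x \<noteq> y \<and> e = {x, y})"

definition spins :: "('v \<Rightarrow> int) set" where
  "spins = {\<sigma>. \<forall>x. \<sigma> x \<in> {-1, 1}}"

definition flip :: "('v \<Rightarrow> int) \<Rightarrow> 'v \<Rightarrow> ('v \<Rightarrow> int)" where
  "flip \<sigma> x = \<sigma>(x := - \<sigma> x)"

definition delta :: "('v \<Rightarrow> int) \<Rightarrow> 'v set \<Rightarrow> bool" where
  "delta \<sigma> e \<longleftrightarrow> (\<forall>x\<in>e. \<forall>y\<in>e. \<sigma> x = \<sigma> y)"

text \<open>Edge configurations eta in {0,1}^E are represented by the set of open edges (eta(e)=1).
  Joint states: pairs (eta, sigma).\<close>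
definition states :: "'v set set \<Rightarrow> ('v set set \<times> ('v \<Rightarrow> int)) set" where
  "states E = {(\<eta>, \<sigma>). \<eta> \<subseteq> E \<and> \<sigma> \<in> spins}"

definition weight :: "real \<Rightarrow> 'v set set \<Rightarrow> 'v set set \<times> ('v \<Rightarrow> int) \<Rightarrow> real" where
  "weight p E s = (\<Prod>e\<in>E. if e \<in> fst s then (if delta (snd s) e then p else 0) else 1 - p)"

definition IP :: "real \<Rightarrow> 'v set set \<Rightarrow> 'v set set \<times> ('v \<Rightarrow> int) \<Rightarrow> real" where
  "IP p E s = weight p E s / (\<Sum>s'\<in>states E. weight p E s')"

definition rate_matrix :: "'a set \<Rightarrow> ('a \<Rightarrow> 'a \<Rightarrow> real) \<Rightarrow> bool" where
  "rate_matrix S Q \<longleftrightarrow> (\<forall>a\<in>S. \<forall>b\<in>S. a \<noteq> b \<longrightarrow> Q a b \<ge> 0) \<and>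
                        (\<forall>a\<in>S. Q a a = - (\<Sum>b\<in>S - {a}. Q a b))"

fun mpow :: "'a set \<Rightarrow> ('a \<Rightarrow> 'a \<Rightarrow> real) \<Rightarrow> nat \<Rightarrow> 'a \<Rightarrow> 'a \<Rightarrow> real" where
  "mpow S Q 0 a b = (if a = b then 1 else 0)"
| "mpow S Q (Suc n) a b = (\<Sum>c\<in>S. Q a c * mpow S Q n c b)"

definition trans_fun :: "'a set \<Rightarrow> ('a \<Rightarrow> 'a \<Rightarrow> real) \<Rightarrow> real \<Rightarrow> 'a \<Rightarrow> 'a \<Rightarrow> real" where
  "trans_fun S Q t a b = (\<Sum>n. t ^ n / fact n * mpow S Q n a b)"

fun path_prod :: "(real \<Rightarrow> 'a \<Rightarrow> 'a \<Rightarrow> real) \<Rightarrow> 'a \<Rightarrow> real list \<Rightarrow> 'a list \<Rightarrow> real" where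
  "path_prod T a (d # ds) (b # bs) = T d a b * path_prod T b ds bs"
| "path_prod T a _ _ = 1"

text \<open>Finite-dimensional distributions of the Markov jump process with rates Q and initial
  distribution mu: P(X_{t0} = a0, X_{t0+d1} = a1, ..., X_{t0+d1+...+dn} = an).\<close>
definition joint_fdd :: "'a set \<Rightarrow> ('a \<Rightarrow> 'a \<Rightarrow> real) \<Rightarrow> ('a \<Rightarrow> real) \<Rightarrow> real \<Rightarrow> 'a
    \<Rightarrow> real list \<Rightarrow> 'a list \<Rightarrow> real" where
  "joint_fdd S Q \<mu> t0 a0 ds as' =
     (\<Sum>a\<in>S. \<mu> a * trans_fun S Q t0 a a0) * path_prod (trans_fun S Q) a0 ds as'"

definition lumped_fdd :: "'a set \<Rightarrow> ('a \<Rightarrow> 'a \<Rightarrow> real) \<Rightarrow> ('a \<Rightarrow> real) \<Rightarrow> ('a \<Rightarrow> 'b) \<Rightarrow> real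
    \<Rightarrow> 'b \<Rightarrow> real list \<Rightarrow> 'b list \<Rightarrow> real" where
  "lumped_fdd S Q \<mu> f t0 y0 ds ys =
     (\<Sum>a0\<in>{a\<in>S. f a = y0}. \<Sum>as'\<in>{as'. length as' = length ys \<and> set as' \<subseteq> S \<and> map f as' = ys}.
        joint_fdd S Q \<mu> t0 a0 ds as')"

definition distribution_on :: "'a set \<Rightarrow> ('a \<Rightarrow> real) \<Rightarrow> bool" where
  "distribution_on S \<mu> \<longleftrightarrow> (\<forall>a\<in>S. \<mu> a \<ge> 0) \<and> (\<Sum>a\<in>S. \<mu> a) = 1"

text \<open>The image f(X_t) of the Markov jump process with rates Q on S is, for every initial
  distribution, a time-homogeneous Markov jump process on T with rates c (c independent of the
  initial distribution): its finite-dimensional distributions are those of a Markov chain with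
  transition function exp(t c).\<close>
definition marginal_markov :: "'a set \<Rightarrow> ('a \<Rightarrow> 'a \<Rightarrow> real) \<Rightarrow> ('a \<Rightarrow> 'b) \<Rightarrow> 'b set
    \<Rightarrow> ('b \<Rightarrow> 'b \<Rightarrow> real) \<Rightarrow> bool" where
  "marginal_markov S Q f T c \<longleftrightarrow>
     (\<forall>\<mu>. distribution_on S \<mu> \<longrightarrow>
        (\<forall>t0 ds y0 ys. t0 \<ge> 0 \<and> (\<forall>d\<in>set ds. d \<ge> 0) \<and> length ds = length ys \<and>
            y0 \<in> T \<and> set ys \<subseteq> T \<longrightarrow>
          lumped_fdd S Q \<mu> f t0 y0 ds ys =
            lumped_fdd S Q \<mu> f t0 y0 [] [] * path_prod (trans_fun T c) y0 ds ys))"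

definition reversible :: "'a set \<Rightarrow> ('a \<Rightarrow> real) \<Rightarrow> ('a \<Rightarrow> 'a \<Rightarrow> real) \<Rightarrow> bool" where
  "reversible S \<pi> q \<longleftrightarrow> (\<forall>a\<in>S. \<forall>b\<in>S. \<pi> a * q a b = \<pi> b * q b a)"

definition ndiff :: "'v set set \<Rightarrow> 'v set set \<times> ('v \<Rightarrow> int) \<Rightarrow> 'v set set \<times> ('v \<Rightarrow> int) \<Rightarrow> nat" where
  "ndiff E s s' = card {e\<in>E. (e \<in> fst s) \<noteq> (e \<in> fst s')} + card {x. snd s x \<noteq> snd s' x}"

end

theory Submission
  imports Defs
begin

text \<open>Under IP an open edge between disagreeing spins has probability zero. Open a single edge
  e = {x, y} with all spins equal (positive probability) and flip the spin at x: the result a'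
  has probability zero. Differentiating the finite-dimensional distributions of the spin
  marginal at time 0, started from a point mass, identifies c(sigma, sigma') with the total
  rate of jumping into the spin fibre of sigma'. Because updates are local, a' is the only
  state of that fibre reachable from a, so q(a, a') = c(sigma, sigma^x) > 0. Reversibility
  would then give IP(a) q(a, a') = IP(a') q(a', a) = 0.\<close>

lemma mpow_abs_le:
  assumes "finite S" and "a \<in> S"
  shows "\<bar>mpow S Q n a b\<bar> \<le> (\<Sum>a'\<in>S. \<Sum>c\<in>S. \<bar>Q a' c\<bar>) ^ n"
  using assms(2)
proof (induction n arbitrary: a)
  case 0
  then show ?case by simp
next
  case (Suc n)
  define M where "M = (\<Sum>a'\<in>S. \<Sum>c\<in>S. \<bar>Q a' c\<bar>)"
  have row_le: "(\<Sum>c\<in>S. \<bar>Q a c\<bar>) \<le> M"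
    unfolding M_def using Suc.prems assms(1)
    by (intro member_le_sum[where f = "\<lambda>a'. \<Sum>c\<in>S. \<bar>Q a' c\<bar>"]) (auto intro: sum_nonneg)
  have M_nonneg: "M \<ge> 0"
    unfolding M_def by (intro sum_nonneg) auto
  have "\<bar>mpow S Q (Suc n) a b\<bar> \<le> (\<Sum>c\<in>S. \<bar>Q a c * mpow S Q n c b\<bar>)"
    by simp
  also have "\<dots> \<le> (\<Sum>c\<in>S. \<bar>Q a c\<bar> * M ^ n)"
    using Suc.IH unfolding M_def by (intro sum_mono) (auto simp: abs_mult intro: mult_left_mono)
  also have "\<dots> = (\<Sum>c\<in>S. \<bar>Q a c\<bar>) * M ^ n"
    by (simp add: sum_distrib_right)
  also have "\<dots> \<le> M * M ^ n"
    using row_le M_nonneg by (intro mult_right_mono) auto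
  finally show ?case
    unfolding M_def by simp
qed

lemma summable_trans_fun_series:
  assumes "finite S" and "a \<in> S"
  shows "summable (\<lambda>n. mpow S Q n a b / fact n * d ^ n)"
proof (rule summable_comparison_test'[OF summable_exp])
  fix n :: nat
  define M where "M = (\<Sum>a'\<in>S. \<Sum>c\<in>S. \<bar>Q a' c\<bar>)"
  have "norm (mpow S Q n a b / fact n * d ^ n) = \<bar>mpow S Q n a b\<bar> * \<bar>d\<bar> ^ n / fact n"
    by (simp add: abs_mult power_abs)
  also have "\<dots> \<le> M ^ n * \<bar>d\<bar> ^ n / fact n"
    using mpow_abs_le[OF assms, of Q n b] unfolding M_def
    by (intro divide_right_mono mult_right_mono) auto
  also have "\<dots> = inverse (fact n) * (M * \<bar>d\<bar>) ^ n"
    by (simp add: field_simps)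
  finally show "norm (mpow S Q n a b / fact n * d ^ n) \<le> inverse (fact n) * (M * \<bar>d\<bar>) ^ n" .
qed

lemma trans_fun_eq_powser: "trans_fun S Q d a b = (\<Sum>n. mpow S Q n a b / fact n * d ^ n)"
  unfolding trans_fun_def by (simp add: field_simps)

lemma trans_fun_0: "trans_fun S Q 0 a b = (if a = b then 1 else 0)"
  unfolding trans_fun_eq_powser using powser_zero[of "\<lambda>n. mpow S Q n a b / fact n"] by simp

lemma mpow_1: "finite S \<Longrightarrow> b \<in> S \<Longrightarrow> mpow S Q 1 a b = Q a b"
  by (simp add: if_distrib cong: if_cong)

lemma powser_div_tendsto:
  fixes \<alpha> :: "nat \<Rightarrow> real"
  assumes summable: "\<And>d. summable (\<lambda>n. \<alpha> n * d ^ n)" and "\<alpha> 0 = 0"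
  shows "((\<lambda>d. (\<Sum>n. \<alpha> n * d ^ n) / d) \<longlongrightarrow> \<alpha> 1) (at 0)"
proof -
  define g where "g = (\<lambda>d::real. \<Sum>n. \<alpha> (Suc n) * d ^ n)"
  have "isCont g 0"
    unfolding g_def by (rule isCont_powser[OF powser_split_head(3)[OF summable[of 1]]]) simp
  moreover have "g 0 = \<alpha> 1"
    unfolding g_def using powser_zero[of "\<lambda>n. \<alpha> (Suc n)"] by simp
  ultimately have "(g \<longlongrightarrow> \<alpha> 1) (at 0)"
    by (simp add: isCont_def)
  moreover have "\<forall>\<^sub>F d in at 0. g d = (\<Sum>n. \<alpha> n * d ^ n) / d"
    unfolding eventually_at_filter g_def
    using powser_split_head(1)[OF summable] \<open>\<alpha> 0 = 0\<close> by simp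
  ultimately show ?thesis
    by (rule Lim_transform_eventually)
qed

lemma trans_fun_div_tendsto:
  assumes "finite S" and "a \<in> S" and "b \<in> S" and "a \<noteq> b"
  shows "((\<lambda>d. trans_fun S Q d a b / d) \<longlongrightarrow> Q a b) (at 0)"
  using powser_div_tendsto[of "\<lambda>n. mpow S Q n a b / fact n", OF summable_trans_fun_series[OF assms(1,2)]]
    assms mpow_1[OF assms(1,3)]
  by (simp add: trans_fun_eq_powser)

lemma lumped_fdd_point_mass:
  assumes "finite S" and "a \<in> S"
  shows "lumped_fdd S Q (\<lambda>a'. if a' = a then 1 else 0) f 0 (f a) ds ys
           = (\<Sum>as' | length as' = length ys \<and> set as' \<subseteq> S \<and> map f as' = ys.
                path_prod (trans_fun S Q) a ds as')"
proof -
  have "(\<Sum>a'\<in>S. (if a' = a then 1 else 0) * trans_fun S Q 0 a' a0) = (if a0 = a then 1 else 0)"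
    for a0
    using assms by (simp add: trans_fun_0 if_distrib[where f = "\<lambda>x. x * _"] cong: if_cong)
  then show ?thesis
    using assms unfolding lumped_fdd_def joint_fdd_def
    by (subst sum.swap) (simp add: if_distrib[where f = "\<lambda>x. x * _"] cong: if_cong)
qed

lemma marginal_markovD:
  assumes "marginal_markov S Q f T c" and "distribution_on S \<mu>" and "t0 \<ge> 0"
    and "\<forall>d\<in>set ds. d \<ge> 0" and "length ds = length ys" and "y0 \<in> T" and "set ys \<subseteq> T"
  shows "lumped_fdd S Q \<mu> f t0 y0 ds ys
           = lumped_fdd S Q \<mu> f t0 y0 [] [] * path_prod (trans_fun T c) y0 ds ys"
  using assms unfolding marginal_markov_def by blast

lemma marginal_markov_trans_fun:
  assumes "marginal_markov S Q f T c" and "finite S" and "a \<in> S" and "f a \<in> T"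
    and "y \<in> T" and "d \<ge> 0"
  shows "(\<Sum>b | b \<in> S \<and> f b = y. trans_fun S Q d a b) = trans_fun T c d (f a) y"
proof -
  let ?\<mu> = "\<lambda>a'. if a' = a then 1 else 0"
  have "distribution_on S ?\<mu>"
    using assms(2,3) by (simp add: distribution_on_def)
  then have "lumped_fdd S Q ?\<mu> f 0 (f a) [d] [y]
      = lumped_fdd S Q ?\<mu> f 0 (f a) [] [] * path_prod (trans_fun T c) (f a) [d] [y]"
    using assms(4-6) by (intro marginal_markovD[OF assms(1)]) auto
  moreover have "{as'. length as' = length [y] \<and> set as' \<subseteq> S \<and> map f as' = [y]}
                   = (\<lambda>b. [b]) ` {b \<in> S. f b = y}"
    by (auto simp: length_Suc_conv)
  moreover have "{as'. length as' = length ([] :: 'b list) \<and> set as' \<subseteq> S \<and> map f as' = []} = {[]}"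
    by auto
  ultimately show ?thesis
    using assms(2,3) by (simp add: lumped_fdd_point_mass sum.reindex inj_on_def)
qed

lemma marginal_markov_rate:
  assumes "marginal_markov S Q f T c" and "finite S" and "finite T"
    and "a \<in> S" and "f a \<in> T" and "y \<in> T" and "f a \<noteq> y"
  shows "(\<Sum>b | b \<in> S \<and> f b = y. Q a b) = c (f a) y"
proof -
  let ?B = "{b \<in> S. f b = y}"
  have lumped: "((\<lambda>d. \<Sum>b\<in>?B. trans_fun S Q d a b / d) \<longlongrightarrow> (\<Sum>b\<in>?B. Q a b)) (at_right 0)"
    using assms(2,4,7) by (intro tendsto_sum tendsto_mono[OF at_le trans_fun_div_tendsto]) auto
  have "((\<lambda>d. trans_fun T c d (f a) y / d) \<longlongrightarrow> c (f a) y) (at_right 0)"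
    using assms(3,5-7) by (intro tendsto_mono[OF at_le trans_fun_div_tendsto]) auto
  moreover have "\<forall>\<^sub>F d in at_right 0. trans_fun T c d (f a) y / d = (\<Sum>b\<in>?B. trans_fun S Q d a b / d)"
    using eventually_at_right_less[of 0]
    by eventually_elim
      (simp add: marginal_markov_trans_fun[OF assms(1,2,4-6)] sum_divide_distrib[symmetric])
  ultimately have "((\<lambda>d. \<Sum>b\<in>?B. trans_fun S Q d a b / d) \<longlongrightarrow> c (f a) y) (at_right 0)"
    by (rule Lim_transform_eventually)
  with lumped show ?thesis
    using tendsto_unique[OF trivial_limit_at_right_real] by blast
qed

lemma finite_spins: "finite (spins :: ('v::finite \<Rightarrow> int) set)"
proof (rule finite_subset)
  show "spins \<subseteq> PiE UNIV (\<lambda>_. {-1, 1 :: int})"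
    by (auto simp: spins_def PiE_def)
qed (auto intro: finite_PiE)

lemma finite_states: "finite (states (E :: ('v::finite) set set))"
proof (rule finite_subset)
  show "states E \<subseteq> Pow E \<times> spins"
    by (auto simp: states_def)
qed (simp add: finite_spins)

lemma ndiff_gt_1:
  fixes s s' :: "'v::finite set set \<times> ('v \<Rightarrow> int)"
  assumes "e \<in> E" and "(e \<in> fst s) \<noteq> (e \<in> fst s')" and "snd s x \<noteq> snd s' x"
  shows "ndiff E s s' > 1"
proof -
  have "card {e \<in> E. (e \<in> fst s) \<noteq> (e \<in> fst s')} > 0"
    using assms(1,2) by (auto simp: card_gt_0_iff)
  moreover have "card {x. snd s x \<noteq> snd s' x} > 0"
    using assms(3) by (auto simp: card_gt_0_iff)
  ultimately show ?thesis
    unfolding ndiff_def by linarith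
qed

lemma rate_flip_eq_marginal_rate:
  fixes E :: "('v::finite) set set"
  assumes local: "\<forall>s\<in>states E. \<forall>s'\<in>states E. ndiff E s s' > 1 \<longrightarrow> q s s' = 0"
    and marginal: "marginal_markov (states E) q snd spins c"
    and s: "(\<eta>, \<sigma>) \<in> states E"
  shows "q (\<eta>, \<sigma>) (\<eta>, flip \<sigma> x) = c \<sigma> (flip \<sigma> x)"
proof -
  let ?\<tau> = "flip \<sigma> x"
  let ?B = "{b \<in> states E. snd b = ?\<tau>}"
  have \<sigma>: "\<sigma> \<in> spins" and \<tau>: "?\<tau> \<in> spins"
    using s by (auto simp: states_def spins_def flip_def)
  have \<sigma>_x: "\<sigma> x \<in> {-1, 1}"
    using \<sigma> by (simp add: spins_def)
  then have \<tau>_ne: "\<sigma> \<noteq> ?\<tau>"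
    by (auto simp: flip_def fun_eq_iff)
  have target: "(\<eta>, ?\<tau>) \<in> ?B"
    using s \<tau> by (simp add: states_def)
  have "q (\<eta>, \<sigma>) b = 0" if b_in: "b \<in> ?B - {(\<eta>, ?\<tau>)}" for b
  proof -
    obtain \<eta>' where b: "b = (\<eta>', ?\<tau>)" "\<eta>' \<subseteq> E" "\<eta>' \<noteq> \<eta>"
      using b_in by (cases b) (auto simp: states_def)
    then obtain e where "e \<in> E" "(e \<in> \<eta>) \<noteq> (e \<in> \<eta>')"
      using s by (auto simp: states_def)
    then have "ndiff E (\<eta>, \<sigma>) b > 1"
      using \<sigma>_x b(1) by (intro ndiff_gt_1[where x = x]) (auto simp: flip_def)
    with local s b_in show ?thesis
      by blast
  qed
  then have "(\<Sum>b\<in>?B. q (\<eta>, \<sigma>) b) = (\<Sum>b\<in>{(\<eta>, ?\<tau>)}. q (\<eta>, \<sigma>) b)"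
    using target by (intro sum.mono_neutral_right) (auto simp: finite_states)
  moreover have "(\<Sum>b\<in>?B. q (\<eta>, \<sigma>) b) = c \<sigma> ?\<tau>"
    using marginal_markov_rate[OF marginal finite_states finite_spins s] \<sigma> \<tau> \<tau>_ne by simp
  ultimately show ?thesis
    by simp
qed

lemma IP_pos:
  fixes E :: "('v::finite) set set"
  assumes "0 < p" and "p < 1" and "s \<in> states E"
    and "\<forall>e\<in>fst s. delta (snd s) e"
  shows "IP p E s > 0"
proof -
  have weight_pos: "weight p E s > 0"
    unfolding weight_def using assms(1,2,4) by (intro prod_pos) auto
  have "weight p E s \<le> (\<Sum>s'\<in>states E. weight p E s')"
    unfolding weight_def using assms(1-3) finite_states
    by (intro member_le_sum prod_nonneg) auto
  with weight_pos show ?thesis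
    unfolding IP_def by simp
qed

lemma IP_eq_0:
  assumes "finite E" and "e \<in> E" and "e \<in> fst s" and "\<not> delta (snd s) e"
  shows "IP p E s = 0"
proof -
  have "weight p E s = 0"
    unfolding weight_def using assms by (intro prod_zero) auto
  then show ?thesis
    by (simp add: IP_def)
qed

lemma reversible_rate_into_null_state:
  assumes "reversible S \<pi> q" and "a \<in> S" and "b \<in> S" and "\<pi> a > 0" and "\<pi> b = 0"
  shows "q a b = 0"
  using assms unfolding reversible_def by (metis mult_eq_0_iff less_irrefl)

theorem theorem2:
  fixes E :: "('v::finite) set set"
    and p :: real
    and q :: "'v set set \<times> ('v \<Rightarrow> int) \<Rightarrow> 'v set set \<times> ('v \<Rightarrow> int) \<Rightarrow> real"
    and c :: "('v \<Rightarrow> int) \<Rightarrow> ('v \<Rightarrow> int) \<Rightarrow> real"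
  assumes graph: "simple_graph E"
    and nonempty: "E \<noteq> {}"
    and p: "0 < p" "p < 1"
    and q_rates: "rate_matrix (states E) q"
    and q_local: "\<forall>s\<in>states E. \<forall>s'\<in>states E. ndiff E s s' > 1 \<longrightarrow> q s s' = 0"
    and c_zero: "\<forall>\<sigma>\<in>spins. \<forall>\<sigma>'\<in>spins. card {x. \<sigma> x \<noteq> \<sigma>' x} \<ge> 2 \<longrightarrow> c \<sigma> \<sigma>' = 0"
    and c_pos: "\<forall>\<sigma>\<in>spins. \<forall>x. c \<sigma> (flip \<sigma> x) > 0"
    and c_diag: "\<forall>\<sigma>\<in>spins. c \<sigma> \<sigma> = - (\<Sum>y\<in>UNIV. c \<sigma> (flip \<sigma> y))"
    and marginal: "marginal_markov (states E) q snd spins c"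
  shows "\<not> reversible (states E) (IP p E) q"
proof
  assume rev: "reversible (states E) (IP p E) q"
  obtain e where e: "e \<in> E"
    using nonempty by blast
  then obtain x y where xy: "e = {x, y}" "x \<noteq> y"
    using graph unfolding simple_graph_def by blast
  define \<sigma> where "\<sigma> = (\<lambda>_ :: 'v. 1 :: int)"
  have \<sigma>: "\<sigma> \<in> spins"
    by (simp add: \<sigma>_def spins_def)
  have states: "({e}, \<sigma>) \<in> states E" "({e}, flip \<sigma> x) \<in> states E"
    using e(1) \<sigma> by (auto simp: states_def spins_def flip_def \<sigma>_def)
  have "IP p E ({e}, \<sigma>) > 0"
    using p states(1) by (intro IP_pos) (auto simp: delta_def \<sigma>_def)
  moreover have "IP p E ({e}, flip \<sigma> x) = 0"
    using e xy by (intro IP_eq_0[of E e]) (auto simp: delta_def flip_def \<sigma>_def)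
  ultimately have "q ({e}, \<sigma>) ({e}, flip \<sigma> x) = 0"
    using reversible_rate_into_null_state[OF rev states] by simp
  moreover have "q ({e}, \<sigma>) ({e}, flip \<sigma> x) > 0"
    using rate_flip_eq_marginal_rate[OF q_local marginal states(1)] c_pos \<sigma> by simp
  ultimately show False
    by simp
qed

end
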